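(* Let $S$ be a Stone relation algebra with at least one additional hypothesis, namely that $S$ satisfies the point axiom: the set $\mathrm{IP}(S)$ of ideal-points of $S$ is finite and non-empty and $\top = \bigsqcup \mathrm{IP}(S)$. Let $\mathrm{I}(S)$ be the set of ideals of $S$ and $\mathrm{M}(S) = \mathrm{I}(S)^{\mathrm{IP}(S)\times\mathrm{IP}(S)}$ the set of matrices indexed by $\mathrm{IP}(S)$ with entries in $\mathrm{I}(S)$. Then: (1) $\mathrm{M}(S)$ is a Stone relation algebra, where $\sqcup$, $\sqcap$, the pseudocomplement, $\bot$ and $\top$ are lifted componentwise from $\mathrm{I}(S)$, and composition, converse and identity are given by $(XY)_{p,q} = \bigsqcup\{X_{p,r}\sqcap Y_{r,q} \mid r\in\mathrm{IP}(S)\}$, $(X^{\smile})_{p,q} = X_{q,p}$, and $1_{p,q} = \top$ if $p=q$ and $1_{p,q}=\bot$ if $p\neq q$. (2) The functions $f : S\to\mathrm{M}(S)$, $f(x)_{p,q} = p^{\smile} x q$, and $g : \mathrm{M}(S)\to S$, $g(X) = \bigsqcup\{p\, X_{p,q}\, q^{\smile} \mid p,q\in\mathrm{IP}(S)\}$, are isomorphisms (of Stone relation algebras) between $S$ and $\mathrm{M}(S)$.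
   Context: A Stone relation algebra is a structure $(S,\sqcup,\sqcap,\cdot,\overline{\,\cdot\,},{}^{\smile},\bot,\top,1)$ (write $xy$ for $x\cdot y$, $\overline{x}$ for the pseudocomplement, $x^{\smile}$ for the converse) such that: $(S,\sqcup,\sqcap,\bot,\top)$ is a bounded distributive lattice with order $x\sqsubseteq y\iff x\sqcup y=y$; $x\sqcap y=\bot\iff x\sqsubseteq\overline{y}$ for all $x,y$; $\overline{x}\sqcup\overline{\overline{x}}=\top$; $\cdot$ is associative with two-sided unit $1$, distributes over $\sqcup$ on both sides, and $\bot$ is a zero of $\cdot$; $x^{\smile\smile}=x$, $(xy)^{\smile}=y^{\smile}x^{\smile}$, $(x\sqcup y)^{\smile}=x^{\smile}\sqcup y^{\smile}$; $\overline{\overline{1}}=1$; $\overline{\overline{xy}}=\overline{\overline{x}}\,\overline{\overline{y}}$; and $xy\sqcap z\sqsubseteq x(y\sqcap x^{\smile}z)$ for all $x,y,z$. For finite non-empty $P\subseteq S$, $\bigsqcup P$ is the join of its elements. An element $x$ is injective if $xx^{\smile}\sqsubseteq 1$, surjective if $1\sqsubseteq x^{\smile}x$, bijective if injective and surjective, a vector if $x\top=x$, a covector if $\top x=x$, a point if it is a bijective vector, and an ideal if it is both a vector and a covector. An ideal-point is a point $p$ such that for all points $q$ and all ideals $x\neq\bot$, $qx\sqsubseteq p$ implies $q\sqsubseteq p$. *)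

theory Defs
  imports Main "HOL-Library.FuncSet"
begin

record 'a sra =
  car :: "'a set"
  jn  :: "'a \<Rightarrow> 'a \<Rightarrow> 'a"
  mt  :: "'a \<Rightarrow> 'a \<Rightarrow> 'a"
  cmp :: "'a \<Rightarrow> 'a \<Rightarrow> 'a"
  pcm :: "'a \<Rightarrow> 'a"
  cnv :: "'a \<Rightarrow> 'a"
  bt  :: "'a"
  tp  :: "'a"
  un  :: "'a"

definition le :: "'a sra \<Rightarrow> 'a \<Rightarrow> 'a \<Rightarrow> bool" where
  "le A x y \<longleftrightarrow> jn A x y = y"

definition stone_ra :: "'a sra \<Rightarrow> bool" where
  "stone_ra A \<longleftrightarrow>
    \<comment> \<open>closure\<close>
    bt A \<in> car A \<and> tp A \<in> car A \<and> un A \<in> car A \<and>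
    (\<forall>x\<in>car A. \<forall>y\<in>car A. jn A x y \<in> car A \<and> mt A x y \<in> car A \<and> cmp A x y \<in> car A) \<and>
    (\<forall>x\<in>car A. pcm A x \<in> car A \<and> cnv A x \<in> car A) \<and>
    \<comment> \<open>bounded distributive lattice\<close>
    (\<forall>x\<in>car A. \<forall>y\<in>car A. \<forall>z\<in>car A.
       jn A (jn A x y) z = jn A x (jn A y z) \<and> mt A (mt A x y) z = mt A x (mt A y z) \<and>
       mt A x (jn A y z) = jn A (mt A x y) (mt A x z)) \<and>
    (\<forall>x\<in>car A. \<forall>y\<in>car A.
       jn A x y = jn A y x \<and> mt A x y = mt A y x \<and>
       jn A x (mt A x y) = x \<and> mt A x (jn A x y) = x) \<and>
    (\<forall>x\<in>car A. jn A x x = x \<and> mt A x x = x \<and> jn A (bt A) x = x \<and> mt A (tp A) x = x) \<and>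
    \<comment> \<open>pseudocomplement, Stone identity\<close>
    (\<forall>x\<in>car A. \<forall>y\<in>car A. mt A x y = bt A \<longleftrightarrow> le A x (pcm A y)) \<and>
    (\<forall>x\<in>car A. jn A (pcm A x) (pcm A (pcm A x)) = tp A) \<and>
    \<comment> \<open>composition: monoid, distributes over join, bottom is zero\<close>
    (\<forall>x\<in>car A. \<forall>y\<in>car A. \<forall>z\<in>car A.
       cmp A (cmp A x y) z = cmp A x (cmp A y z) \<and>
       cmp A x (jn A y z) = jn A (cmp A x y) (cmp A x z) \<and>
       cmp A (jn A x y) z = jn A (cmp A x z) (cmp A y z)) \<and>
    (\<forall>x\<in>car A. cmp A (un A) x = x \<and> cmp A x (un A) = x \<and>
       cmp A (bt A) x = bt A \<and> cmp A x (bt A) = bt A) \<and>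
    \<comment> \<open>converse\<close>
    (\<forall>x\<in>car A. cnv A (cnv A x) = x) \<and>
    (\<forall>x\<in>car A. \<forall>y\<in>car A. cnv A (cmp A x y) = cmp A (cnv A y) (cnv A x) \<and>
       cnv A (jn A x y) = jn A (cnv A x) (cnv A y)) \<and>
    \<comment> \<open>remaining axioms\<close>
    pcm A (pcm A (un A)) = un A \<and>
    (\<forall>x\<in>car A. \<forall>y\<in>car A. pcm A (pcm A (cmp A x y)) = cmp A (pcm A (pcm A x)) (pcm A (pcm A y))) \<and>
    (\<forall>x\<in>car A. \<forall>y\<in>car A. \<forall>z\<in>car A.
       le A (mt A (cmp A x y) z) (cmp A x (mt A y (cmp A (cnv A x) z))))"

definition fjoin :: "'a sra \<Rightarrow> 'a set \<Rightarrow> 'a" where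
  "fjoin A P = Finite_Set.fold (jn A) (bt A) P"

definition injective :: "'a sra \<Rightarrow> 'a \<Rightarrow> bool" where
  "injective A x \<longleftrightarrow> le A (cmp A x (cnv A x)) (un A)"
definition surjective :: "'a sra \<Rightarrow> 'a \<Rightarrow> bool" where
  "surjective A x \<longleftrightarrow> le A (un A) (cmp A (cnv A x) x)"
definition bijective :: "'a sra \<Rightarrow> 'a \<Rightarrow> bool" where
  "bijective A x \<longleftrightarrow> injective A x \<and> surjective A x"
definition vector :: "'a sra \<Rightarrow> 'a \<Rightarrow> bool" where
  "vector A x \<longleftrightarrow> cmp A x (tp A) = x"
definition covector :: "'a sra \<Rightarrow> 'a \<Rightarrow> bool" where
  "covector A x \<longleftrightarrow> cmp A (tp A) x = x"
definition point :: "'a sra \<Rightarrow> 'a \<Rightarrow> bool" where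
  "point A x \<longleftrightarrow> bijective A x \<and> vector A x"
definition ideal :: "'a sra \<Rightarrow> 'a \<Rightarrow> bool" where
  "ideal A x \<longleftrightarrow> vector A x \<and> covector A x"
definition ideal_point :: "'a sra \<Rightarrow> 'a \<Rightarrow> bool" where
  "ideal_point A p \<longleftrightarrow> point A p \<and>
     (\<forall>q\<in>car A. \<forall>x\<in>car A. point A q \<and> ideal A x \<and> x \<noteq> bt A \<and> le A (cmp A q x) p
        \<longrightarrow> le A q p)"

definition IPs :: "'a sra \<Rightarrow> 'a set" where
  "IPs A = {p \<in> car A. ideal_point A p}"
definition Is :: "'a sra \<Rightarrow> 'a set" where
  "Is A = {x \<in> car A. ideal A x}"

definition point_axiom :: "'a sra \<Rightarrow> bool" where
  "point_axiom A \<longleftrightarrow> finite (IPs A) \<and> IPs A \<noteq> {} \<and> tp A = fjoin A (IPs A)"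

definition Mat :: "'a sra \<Rightarrow> ('a \<times> 'a \<Rightarrow> 'a) sra" where
  "Mat S = (let P = IPs S \<times> IPs S in
    \<lparr> car = P \<rightarrow>\<^sub>E Is S,
      jn = (\<lambda>X Y. restrict (\<lambda>pq. jn S (X pq) (Y pq)) P),
      mt = (\<lambda>X Y. restrict (\<lambda>pq. mt S (X pq) (Y pq)) P),
      cmp = (\<lambda>X Y. restrict (\<lambda>(p,q). fjoin S ((\<lambda>r. mt S (X (p,r)) (Y (r,q))) ` IPs S)) P),
      pcm = (\<lambda>X. restrict (\<lambda>pq. pcm S (X pq)) P),
      cnv = (\<lambda>X. restrict (\<lambda>(p,q). X (q,p)) P),
      bt = restrict (\<lambda>pq. bt S) P,
      tp = restrict (\<lambda>pq. tp S) P,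
      un = restrict (\<lambda>(p,q). if p = q then tp S else bt S) P \<rparr>)"

definition sra_iso :: "'a sra \<Rightarrow> 'b sra \<Rightarrow> ('a \<Rightarrow> 'b) \<Rightarrow> bool" where
  "sra_iso A B h \<longleftrightarrow> bij_betw h (car A) (car B) \<and>
     (\<forall>x\<in>car A. \<forall>y\<in>car A.
        h (jn A x y) = jn B (h x) (h y) \<and> h (mt A x y) = mt B (h x) (h y) \<and>
        h (cmp A x y) = cmp B (h x) (h y)) \<and>
     (\<forall>x\<in>car A. h (pcm A x) = pcm B (h x) \<and> h (cnv A x) = cnv B (h x)) \<and>
     h (bt A) = bt B \<and> h (tp A) = tp B \<and> h (un A) = un B"

definition f_iso :: "'a sra \<Rightarrow> 'a \<Rightarrow> ('a \<times> 'a \<Rightarrow> 'a)" where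
  "f_iso S x = restrict (\<lambda>(p,q). cmp S (cmp S (cnv S p) x) q) (IPs S \<times> IPs S)"

definition g_iso :: "'a sra \<Rightarrow> ('a \<times> 'a \<Rightarrow> 'a) \<Rightarrow> 'a" where
  "g_iso S X = fjoin S ((\<lambda>(p,q). cmp S (cmp S p (X (p,q))) (cnv S q)) ` (IPs S \<times> IPs S))"

end

theory Submission
  imports Defs
begin

(* The ideal-points behave like an orthonormal basis: distinct ideal-points p, q are disjoint,
   p\<^sup>\<smile> q = \<bottom>, and the point axiom together with the Dedekind rule gives
   1 = \<Squnion>{r r\<^sup>\<smile> | r ideal-point}.  Hence x is recovered from its coordinates p\<^sup>\<smile> x q, which are
   ideals, as x = \<Squnion>{p (p\<^sup>\<smile> x q) q\<^sup>\<smile>}, so f and g are mutually inverse.  The coordinate maps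
   preserve joins, meets and pseudocomplements because points are injective and surjective
   vectors, and inserting 1 = \<Squnion> r r\<^sup>\<smile> between x and y turns composition into the matrix product,
   since ideals compose by meet.  So f is an isomorphism onto M(S), and the Stone relation algebra
   axioms of M(S) are transported from S along f instead of being checked directly. *)

section \<open>Transport along isomorphisms\<close>

lemma stone_ra_closed:
  assumes "stone_ra A"
  shows "bt A \<in> car A" "tp A \<in> car A" "un A \<in> car A"
    "x \<in> car A \<Longrightarrow> y \<in> car A \<Longrightarrow> jn A x y \<in> car A"
    "x \<in> car A \<Longrightarrow> y \<in> car A \<Longrightarrow> mt A x y \<in> car A"
    "x \<in> car A \<Longrightarrow> y \<in> car A \<Longrightarrow> cmp A x y \<in> car A"
    "x \<in> car A \<Longrightarrow> pcm A x \<in> car A"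
    "x \<in> car A \<Longrightarrow> cnv A x \<in> car A"
proof -
  have "bt A \<in> car A \<and> tp A \<in> car A \<and> un A \<in> car A"
    using assms unfolding stone_ra_def by (elim conjE) (intro conjI; assumption)
  moreover have "\<forall>x\<in>car A. \<forall>y\<in>car A. jn A x y \<in> car A \<and> mt A x y \<in> car A \<and> cmp A x y \<in> car A"
    using assms unfolding stone_ra_def by (elim conjE) assumption
  moreover have "\<forall>x\<in>car A. pcm A x \<in> car A \<and> cnv A x \<in> car A"
    using assms unfolding stone_ra_def by (elim conjE) assumption
  ultimately show "bt A \<in> car A" "tp A \<in> car A" "un A \<in> car A"
    "x \<in> car A \<Longrightarrow> y \<in> car A \<Longrightarrow> jn A x y \<in> car A"
    "x \<in> car A \<Longrightarrow> y \<in> car A \<Longrightarrow> mt A x y \<in> car A"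
    "x \<in> car A \<Longrightarrow> y \<in> car A \<Longrightarrow> cmp A x y \<in> car A"
    "x \<in> car A \<Longrightarrow> pcm A x \<in> car A"
    "x \<in> car A \<Longrightarrow> cnv A x \<in> car A"
    by blast+
qed

lemma sra_isoD:
  assumes "sra_iso A B h"
  shows "car B = h ` car A" "inj_on h (car A)"
    "x \<in> car A \<Longrightarrow> y \<in> car A \<Longrightarrow> jn B (h x) (h y) = h (jn A x y)"
    "x \<in> car A \<Longrightarrow> y \<in> car A \<Longrightarrow> mt B (h x) (h y) = h (mt A x y)"
    "x \<in> car A \<Longrightarrow> y \<in> car A \<Longrightarrow> cmp B (h x) (h y) = h (cmp A x y)"
    "x \<in> car A \<Longrightarrow> pcm B (h x) = h (pcm A x)"
    "x \<in> car A \<Longrightarrow> cnv B (h x) = h (cnv A x)"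
    "bt B = h (bt A)" "tp B = h (tp A)" "un B = h (un A)"
  using assms by (simp_all add: sra_iso_def bij_betw_def)

lemma stone_ra_transfer:
  assumes A: "stone_ra A" and h: "sra_iso A B h"
  shows "stone_ra B"
proof -
  note closed = stone_ra_closed[OF A] and ops = sra_isoD(3-10)[OF h]
  have h_eq: "\<And>x y. x \<in> car A \<Longrightarrow> y \<in> car A \<Longrightarrow> h x = h y \<longleftrightarrow> x = y"
    using sra_isoD(2)[OF h] by (auto dest: inj_onD)
  have le_h: "\<And>x y. x \<in> car A \<Longrightarrow> y \<in> car A \<Longrightarrow> le B (h x) (h y) \<longleftrightarrow> le A x y"
    unfolding le_def using ops h_eq closed by simp
  (* Every axiom of B is the image of the same axiom of A: quantify over the image of the
     carrier of A, push h outwards through all operations and cancel it by injectivity. *)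
  show ?thesis
    unfolding stone_ra_def sra_isoD(1)[OF h] Ball_image_comp comp_def
    apply (simp only: Ball_def ops closed h_eq le_h cong: imp_cong)
    apply (insert A[unfolded stone_ra_def Ball_def])
    apply (intro conjI)
    apply ((elim conjE, assumption) | (intro allI impI conjI imageI closed; assumption))+
    done
qed

lemma sra_iso_inverse:
  assumes A: "stone_ra A" and h: "sra_iso A B h"
    and g_h: "\<And>x. x \<in> car A \<Longrightarrow> g (h x) = x"
    and g_closed: "\<And>X. X \<in> car B \<Longrightarrow> g X \<in> car A"
    and h_g: "\<And>X. X \<in> car B \<Longrightarrow> h (g X) = X"
  shows "sra_iso B A g"
proof -
  note closed = stone_ra_closed[OF A] and ops = sra_isoD(3-10)[OF h]
  have "h x \<in> car B" if "x \<in> car A" for x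
    using sra_isoD(1)[OF h] that by simp
  then have "bij_betw g (car B) (car A)"
    by (intro bij_betwI[where g = h]) (auto simp: g_h g_closed h_g)
  moreover have "g (jn B X Y) = jn A (g X) (g Y) \<and> g (mt B X Y) = mt A (g X) (g Y) \<and>
      g (cmp B X Y) = cmp A (g X) (g Y)" if XY: "X \<in> car B" "Y \<in> car B" for X Y
  proof -
    obtain x y where "x \<in> car A" "y \<in> car A" "X = h x" "Y = h y"
      using XY unfolding sra_isoD(1)[OF h] by blast
    then show ?thesis using closed ops g_h by simp
  qed
  moreover have "g (pcm B X) = pcm A (g X) \<and> g (cnv B X) = cnv A (g X)" if X: "X \<in> car B" for X
  proof -
    obtain x where "x \<in> car A" "X = h x"
      using X unfolding sra_isoD(1)[OF h] by blast
    then show ?thesis using closed ops g_h by simp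
  qed
  ultimately show ?thesis
    unfolding sra_iso_def using closed ops g_h by simp
qed

locale stone_relation_algebra =
  fixes S :: "'a sra"
  assumes stone_ra: "stone_ra S"
begin

abbreviation join (infixl \<open>\<squnion>\<close> 65) where "x \<squnion> y \<equiv> jn S x y"
abbreviation meet (infixl \<open>\<sqinter>\<close> 70) where "x \<sqinter> y \<equiv> mt S x y"
abbreviation comp (infixl \<open>\<cdot>\<close> 75) where "x \<cdot> y \<equiv> cmp S x y"
abbreviation pseudo_complement (\<open>\<sim>_\<close> [80] 80) where "\<sim>x \<equiv> pcm S x"
abbreviation converse (\<open>_\<^sup>\<smile>\<close> [1000] 1000) where "x\<^sup>\<smile> \<equiv> cnv S x"
abbreviation bot_element (\<open>\<bottom>\<close>) where "\<bottom> \<equiv> bt S"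
abbreviation top_element (\<open>\<top>\<close>) where "\<top> \<equiv> tp S"
abbreviation one_element (\<open>\<one>\<close>) where "\<one> \<equiv> un S"
abbreviation less_eq (infix \<open>\<sqsubseteq>\<close> 50) where "x \<sqsubseteq> y \<equiv> le S x y"
abbreviation Join (\<open>\<Squnion>_\<close> [900] 900) where "\<Squnion>P \<equiv> fjoin S P"

lemma closed [simp]:
  "\<bottom> \<in> car S" "\<top> \<in> car S" "\<one> \<in> car S"
  "x \<in> car S \<Longrightarrow> y \<in> car S \<Longrightarrow> x \<squnion> y \<in> car S"
  "x \<in> car S \<Longrightarrow> y \<in> car S \<Longrightarrow> x \<sqinter> y \<in> car S"
  "x \<in> car S \<Longrightarrow> y \<in> car S \<Longrightarrow> x \<cdot> y \<in> car S"
  "x \<in> car S \<Longrightarrow> \<sim>x \<in> car S"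
  "x \<in> car S \<Longrightarrow> x\<^sup>\<smile> \<in> car S"
  by (simp_all add: stone_ra_closed[OF stone_ra])

context
  fixes x y z
  assumes carrier: "x \<in> car S" "y \<in> car S" "z \<in> car S"
begin

lemma join_assoc: "x \<squnion> y \<squnion> z = x \<squnion> (y \<squnion> z)"
  using stone_ra carrier unfolding stone_ra_def by meson

lemma meet_assoc: "x \<sqinter> y \<sqinter> z = x \<sqinter> (y \<sqinter> z)"
  using stone_ra carrier unfolding stone_ra_def by meson

lemma meet_join_distrib: "x \<sqinter> (y \<squnion> z) = x \<sqinter> y \<squnion> x \<sqinter> z"
  using stone_ra carrier unfolding stone_ra_def by meson

lemma comp_assoc: "x \<cdot> y \<cdot> z = x \<cdot> (y \<cdot> z)"
  using stone_ra carrier unfolding stone_ra_def by meson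

lemma comp_join_distrib_left: "x \<cdot> (y \<squnion> z) = x \<cdot> y \<squnion> x \<cdot> z"
  using stone_ra carrier unfolding stone_ra_def by meson

lemma comp_join_distrib_right: "(x \<squnion> y) \<cdot> z = x \<cdot> z \<squnion> y \<cdot> z"
  using stone_ra carrier unfolding stone_ra_def by meson

lemma dedekind: "x \<cdot> y \<sqinter> z \<sqsubseteq> x \<cdot> (y \<sqinter> x\<^sup>\<smile> \<cdot> z)"
  using stone_ra carrier unfolding stone_ra_def by meson

end

context
  fixes x y
  assumes carrier: "x \<in> car S" "y \<in> car S"
begin

lemma join_comm: "x \<squnion> y = y \<squnion> x"
  using stone_ra carrier unfolding stone_ra_def by meson

lemma meet_comm: "x \<sqinter> y = y \<sqinter> x"
  using stone_ra carrier unfolding stone_ra_def by meson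

lemma join_meet_absorb: "x \<squnion> x \<sqinter> y = x"
  using stone_ra carrier unfolding stone_ra_def by meson

lemma meet_join_absorb: "x \<sqinter> (x \<squnion> y) = x"
  using stone_ra carrier unfolding stone_ra_def by meson

lemma meet_eq_bot_iff_le_pcm: "x \<sqinter> y = \<bottom> \<longleftrightarrow> x \<sqsubseteq> \<sim>y"
  using stone_ra carrier unfolding stone_ra_def by meson

lemma conv_comp: "(x \<cdot> y)\<^sup>\<smile> = y\<^sup>\<smile> \<cdot> x\<^sup>\<smile>"
  using stone_ra carrier unfolding stone_ra_def by meson

lemma conv_join: "(x \<squnion> y)\<^sup>\<smile> = x\<^sup>\<smile> \<squnion> y\<^sup>\<smile>"
  using stone_ra carrier unfolding stone_ra_def by meson

end

context
  fixes x
  assumes carrier: "x \<in> car S"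
begin

lemma join_idem [simp]: "x \<squnion> x = x"
  using stone_ra carrier unfolding stone_ra_def by meson

lemma meet_idem [simp]: "x \<sqinter> x = x"
  using stone_ra carrier unfolding stone_ra_def by meson

lemma bot_join [simp]: "\<bottom> \<squnion> x = x"
  using stone_ra carrier unfolding stone_ra_def by meson

lemma top_meet [simp]: "\<top> \<sqinter> x = x"
  using stone_ra carrier unfolding stone_ra_def by meson

lemma comp_one_left [simp]: "\<one> \<cdot> x = x"
  using stone_ra carrier unfolding stone_ra_def by meson

lemma comp_one_right [simp]: "x \<cdot> \<one> = x"
  using stone_ra carrier unfolding stone_ra_def by meson

lemma comp_bot_left [simp]: "\<bottom> \<cdot> x = \<bottom>"
  using stone_ra carrier unfolding stone_ra_def by meson

lemma comp_bot_right [simp]: "x \<cdot> \<bottom> = \<bottom>"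
  using stone_ra carrier unfolding stone_ra_def by meson

lemma conv_conv [simp]: "x\<^sup>\<smile>\<^sup>\<smile> = x"
  using stone_ra carrier unfolding stone_ra_def by meson

end

lemma le_iff_meet: "x \<in> car S \<Longrightarrow> y \<in> car S \<Longrightarrow> x \<sqsubseteq> y \<longleftrightarrow> x \<sqinter> y = x"
  by (metis le_def meet_join_absorb join_meet_absorb join_comm meet_comm)

lemma le_refl [simp]: "x \<in> car S \<Longrightarrow> x \<sqsubseteq> x"
  by (simp add: le_def)

lemma le_antisym: "x \<in> car S \<Longrightarrow> y \<in> car S \<Longrightarrow> x \<sqsubseteq> y \<Longrightarrow> y \<sqsubseteq> x \<Longrightarrow> x = y"
  by (metis le_def join_comm)

lemma le_trans: "x \<sqsubseteq> y \<Longrightarrow> y \<sqsubseteq> z \<Longrightarrow> x \<in> car S \<Longrightarrow> y \<in> car S \<Longrightarrow> z \<in> car S \<Longrightarrow> x \<sqsubseteq> z"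
  by (metis le_def join_assoc)

lemma join_upper1 [simp]: "x \<in> car S \<Longrightarrow> y \<in> car S \<Longrightarrow> x \<sqsubseteq> x \<squnion> y"
  by (metis le_def join_assoc join_idem)

lemma join_upper2 [simp]: "x \<in> car S \<Longrightarrow> y \<in> car S \<Longrightarrow> y \<sqsubseteq> x \<squnion> y"
  by (metis join_upper1 join_comm)

lemma join_le_iff [simp]:
  "x \<in> car S \<Longrightarrow> y \<in> car S \<Longrightarrow> z \<in> car S \<Longrightarrow> x \<squnion> y \<sqsubseteq> z \<longleftrightarrow> x \<sqsubseteq> z \<and> y \<sqsubseteq> z"
  by (metis le_def join_assoc join_upper1 join_upper2 le_trans closed(4))

lemma meet_lower1 [simp]: "x \<in> car S \<Longrightarrow> y \<in> car S \<Longrightarrow> x \<sqinter> y \<sqsubseteq> x"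
  by (metis le_iff_meet meet_assoc meet_comm meet_idem closed(5))

lemma meet_lower2 [simp]: "x \<in> car S \<Longrightarrow> y \<in> car S \<Longrightarrow> x \<sqinter> y \<sqsubseteq> y"
  by (metis meet_lower1 meet_comm)

lemma le_meet_iff [simp]:
  "x \<in> car S \<Longrightarrow> y \<in> car S \<Longrightarrow> z \<in> car S \<Longrightarrow> z \<sqsubseteq> x \<sqinter> y \<longleftrightarrow> z \<sqsubseteq> x \<and> z \<sqsubseteq> y"
  by (metis le_iff_meet meet_assoc meet_lower1 meet_lower2 le_trans closed(5))

lemma bot_least [simp]: "x \<in> car S \<Longrightarrow> \<bottom> \<sqsubseteq> x"
  by (simp add: le_def)

lemma top_greatest [simp]: "x \<in> car S \<Longrightarrow> x \<sqsubseteq> \<top>"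
  by (metis le_iff_meet top_meet meet_comm closed(2))

lemma le_bot_iff [simp]: "x \<in> car S \<Longrightarrow> x \<sqsubseteq> \<bottom> \<longleftrightarrow> x = \<bottom>"
  by (metis le_antisym bot_least closed(1) le_refl)

lemma meet_bot [simp]: "x \<in> car S \<Longrightarrow> x \<sqinter> \<bottom> = \<bottom>"
  by (metis le_iff_meet meet_comm bot_least closed(1))

lemma meet_mono:
  "x \<in> car S \<Longrightarrow> y \<in> car S \<Longrightarrow> x' \<in> car S \<Longrightarrow> y' \<in> car S \<Longrightarrow> x \<sqsubseteq> x' \<Longrightarrow> y \<sqsubseteq> y'
    \<Longrightarrow> x \<sqinter> y \<sqsubseteq> x' \<sqinter> y'"
  by (meson meet_lower1 meet_lower2 le_meet_iff le_trans closed(5))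

lemma comp_left_mono:
  "x \<in> car S \<Longrightarrow> y \<in> car S \<Longrightarrow> z \<in> car S \<Longrightarrow> y \<sqsubseteq> z \<Longrightarrow> x \<cdot> y \<sqsubseteq> x \<cdot> z"
  by (metis le_def comp_join_distrib_left)

lemma comp_right_mono:
  "x \<in> car S \<Longrightarrow> y \<in> car S \<Longrightarrow> z \<in> car S \<Longrightarrow> x \<sqsubseteq> y \<Longrightarrow> x \<cdot> z \<sqsubseteq> y \<cdot> z"
  by (metis le_def comp_join_distrib_right)

lemma comp_mono:
  "x \<in> car S \<Longrightarrow> y \<in> car S \<Longrightarrow> x' \<in> car S \<Longrightarrow> y' \<in> car S \<Longrightarrow> x \<sqsubseteq> x' \<Longrightarrow> y \<sqsubseteq> y'
    \<Longrightarrow> x \<cdot> y \<sqsubseteq> x' \<cdot> y'"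
  by (meson comp_left_mono comp_right_mono le_trans closed(6))

lemma conv_mono: "x \<in> car S \<Longrightarrow> y \<in> car S \<Longrightarrow> x \<sqsubseteq> y \<Longrightarrow> x\<^sup>\<smile> \<sqsubseteq> y\<^sup>\<smile>"
  by (metis le_def conv_join)

lemma conv_le_conv_iff [simp]: "x \<in> car S \<Longrightarrow> y \<in> car S \<Longrightarrow> x\<^sup>\<smile> \<sqsubseteq> y\<^sup>\<smile> \<longleftrightarrow> x \<sqsubseteq> y"
  by (metis conv_mono conv_conv closed(8))

lemma conv_top [simp]: "\<top>\<^sup>\<smile> = \<top>"
  by (metis le_antisym top_greatest conv_conv conv_mono closed(2,8))

lemma conv_meet:
  assumes "x \<in> car S" "y \<in> car S"
  shows "(x \<sqinter> y)\<^sup>\<smile> = x\<^sup>\<smile> \<sqinter> y\<^sup>\<smile>"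
proof (rule le_antisym)
  show "(x \<sqinter> y)\<^sup>\<smile> \<sqsubseteq> x\<^sup>\<smile> \<sqinter> y\<^sup>\<smile>"
    using assms by (simp add: conv_mono)
  have "(x\<^sup>\<smile> \<sqinter> y\<^sup>\<smile>)\<^sup>\<smile> \<sqsubseteq> x \<sqinter> y"
    using assms conv_mono[of "x\<^sup>\<smile> \<sqinter> y\<^sup>\<smile>" "x\<^sup>\<smile>"] conv_mono[of "x\<^sup>\<smile> \<sqinter> y\<^sup>\<smile>" "y\<^sup>\<smile>"] by simp
  then show "x\<^sup>\<smile> \<sqinter> y\<^sup>\<smile> \<sqsubseteq> (x \<sqinter> y)\<^sup>\<smile>"
    using assms conv_mono[of "(x\<^sup>\<smile> \<sqinter> y\<^sup>\<smile>)\<^sup>\<smile>" "x \<sqinter> y"] by simp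
qed (use assms in simp_all)

lemma dedekind_right:
  assumes "x \<in> car S" "y \<in> car S" "z \<in> car S"
  shows "y \<cdot> x \<sqinter> z \<sqsubseteq> (y \<sqinter> z \<cdot> x\<^sup>\<smile>) \<cdot> x"
proof -
  have "(y \<cdot> x \<sqinter> z)\<^sup>\<smile> = x\<^sup>\<smile> \<cdot> y\<^sup>\<smile> \<sqinter> z\<^sup>\<smile>"
    and "((y \<sqinter> z \<cdot> x\<^sup>\<smile>) \<cdot> x)\<^sup>\<smile> = x\<^sup>\<smile> \<cdot> (y\<^sup>\<smile> \<sqinter> x\<^sup>\<smile>\<^sup>\<smile> \<cdot> z\<^sup>\<smile>)"
    using assms by (simp_all add: conv_meet conv_comp)
  then have "(y \<cdot> x \<sqinter> z)\<^sup>\<smile> \<sqsubseteq> ((y \<sqinter> z \<cdot> x\<^sup>\<smile>) \<cdot> x)\<^sup>\<smile>"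
    using assms dedekind[of "x\<^sup>\<smile>" "y\<^sup>\<smile>" "z\<^sup>\<smile>"] by simp
  then show ?thesis
    using assms by simp
qed

lemma le_comp_conv_comp:
  assumes "x \<in> car S"
  shows "x \<sqsubseteq> x \<cdot> x\<^sup>\<smile> \<cdot> x"
proof -
  have "x \<sqsubseteq> x \<cdot> (\<one> \<sqinter> x\<^sup>\<smile> \<cdot> x)"
    using dedekind[of x \<one> x] assms by simp
  moreover have "x \<cdot> (\<one> \<sqinter> x\<^sup>\<smile> \<cdot> x) \<sqsubseteq> x \<cdot> (x\<^sup>\<smile> \<cdot> x)"
    using assms by (intro comp_left_mono) simp_all
  ultimately have "x \<sqsubseteq> x \<cdot> (x\<^sup>\<smile> \<cdot> x)"
    by (rule le_trans) (use assms in simp_all)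
  then show ?thesis
    using assms by (simp add: comp_assoc)
qed

lemma injective_conv_comp_meet:
  assumes p: "p \<in> car S" "injective S p" and y: "y \<in> car S" and z: "z \<in> car S"
  shows "p\<^sup>\<smile> \<cdot> (y \<sqinter> z) = p\<^sup>\<smile> \<cdot> y \<sqinter> p\<^sup>\<smile> \<cdot> z"
proof (rule le_antisym)
  show "p\<^sup>\<smile> \<cdot> (y \<sqinter> z) \<sqsubseteq> p\<^sup>\<smile> \<cdot> y \<sqinter> p\<^sup>\<smile> \<cdot> z"
    using p y z comp_left_mono[of "p\<^sup>\<smile>" "y \<sqinter> z" y] comp_left_mono[of "p\<^sup>\<smile>" "y \<sqinter> z" z] by simp
  have "p\<^sup>\<smile> \<cdot> y \<sqinter> p\<^sup>\<smile> \<cdot> z \<sqsubseteq> p\<^sup>\<smile> \<cdot> (y \<sqinter> p \<cdot> (p\<^sup>\<smile> \<cdot> z))"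
    using dedekind[of "p\<^sup>\<smile>" y "p\<^sup>\<smile> \<cdot> z"] p y z by simp
  moreover have "p \<cdot> (p\<^sup>\<smile> \<cdot> z) \<sqsubseteq> z"
    using p z comp_right_mono[of "p \<cdot> p\<^sup>\<smile>" \<one> z] by (simp add: injective_def comp_assoc)
  then have "p\<^sup>\<smile> \<cdot> (y \<sqinter> p \<cdot> (p\<^sup>\<smile> \<cdot> z)) \<sqsubseteq> p\<^sup>\<smile> \<cdot> (y \<sqinter> z)"
    using p y z meet_mono[of y "p \<cdot> (p\<^sup>\<smile> \<cdot> z)" y z] by (simp add: comp_left_mono)
  ultimately show "p\<^sup>\<smile> \<cdot> y \<sqinter> p\<^sup>\<smile> \<cdot> z \<sqsubseteq> p\<^sup>\<smile> \<cdot> (y \<sqinter> z)"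
    by (rule le_trans) (use p y z in simp_all)
qed (use p y z in simp_all)

lemma injective_meet_comp:
  assumes "q \<in> car S" "injective S q" "y \<in> car S" "z \<in> car S"
  shows "(y \<sqinter> z) \<cdot> q = y \<cdot> q \<sqinter> z \<cdot> q"
proof -
  have "((y \<sqinter> z) \<cdot> q)\<^sup>\<smile> = (y \<cdot> q \<sqinter> z \<cdot> q)\<^sup>\<smile>"
    using assms injective_conv_comp_meet[of q "y\<^sup>\<smile>" "z\<^sup>\<smile>"] by (simp add: conv_comp conv_meet)
  then have "((y \<sqinter> z) \<cdot> q)\<^sup>\<smile>\<^sup>\<smile> = (y \<cdot> q \<sqinter> z \<cdot> q)\<^sup>\<smile>\<^sup>\<smile>"
    by (rule arg_cong)
  then show ?thesis
    using assms by simp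
qed

subsection \<open>Finite joins\<close>

(* Folding requires a function that commutes on all arguments, but the join commutes only on
   the carrier; so we fold a copy of it that is the identity outside the carrier. *)

definition guarded_join :: "'a \<Rightarrow> 'a \<Rightarrow> 'a" where
  "guarded_join x y = (if y \<in> car S then x \<squnion> y else y)"

lemma comp_fun_idem_on_guarded_join: "comp_fun_idem_on (car S) guarded_join"
proof
  fix x y assume "x \<in> car S" "y \<in> car S"
  then show "guarded_join y \<circ> guarded_join x = guarded_join x \<circ> guarded_join y"
    and "guarded_join x \<circ> guarded_join x = guarded_join x"
    by (auto simp: fun_eq_iff guarded_join_def join_assoc[symmetric] join_comm[of x y])
qed

interpretation guarded_join: comp_fun_idem_on "car S" guarded_join
  by (rule comp_fun_idem_on_guarded_join)

lemma fold_guarded_join_closed: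
  "finite P \<Longrightarrow> P \<subseteq> car S \<Longrightarrow> Finite_Set.fold guarded_join \<bottom> P \<in> car S"
  by (induction P rule: finite_induct) (simp_all add: guarded_join.fold_insert_idem guarded_join_def)

lemma fjoin_eq_fold_guarded_join: "P \<subseteq> car S \<Longrightarrow> \<Squnion>P = Finite_Set.fold guarded_join \<bottom> P"
  unfolding fjoin_def by (rule fold_closed_eq[where B = "car S"]) (auto simp: guarded_join_def)

lemma fjoin_closed [simp]: "finite P \<Longrightarrow> P \<subseteq> car S \<Longrightarrow> \<Squnion>P \<in> car S"
  by (simp add: fjoin_eq_fold_guarded_join fold_guarded_join_closed)

lemma fjoin_empty [simp]: "\<Squnion>{} = \<bottom>"
  by (simp add: fjoin_def)

lemma fjoin_insert:
  "finite P \<Longrightarrow> P \<subseteq> car S \<Longrightarrow> x \<in> car S \<Longrightarrow> \<Squnion>(insert x P) = x \<squnion> \<Squnion>P"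
  by (simp add: fjoin_eq_fold_guarded_join guarded_join.fold_insert_idem fold_guarded_join_closed)
    (simp add: guarded_join_def fold_guarded_join_closed)

lemma fjoin_upper: "finite P \<Longrightarrow> P \<subseteq> car S \<Longrightarrow> x \<in> P \<Longrightarrow> x \<sqsubseteq> \<Squnion>P"
proof (induction P rule: finite_induct)
  case (insert y P)
  then show ?case by (auto simp: fjoin_insert intro: le_trans[OF _ join_upper2])
qed simp

lemma fjoin_least:
  "finite P \<Longrightarrow> P \<subseteq> car S \<Longrightarrow> u \<in> car S \<Longrightarrow> (\<And>x. x \<in> P \<Longrightarrow> x \<sqsubseteq> u) \<Longrightarrow> \<Squnion>P \<sqsubseteq> u"
  by (induction P rule: finite_induct) (simp_all add: fjoin_insert)

lemma fjoin_eqI: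
  "finite P \<Longrightarrow> P \<subseteq> car S \<Longrightarrow> u \<in> P \<Longrightarrow> (\<And>x. x \<in> P \<Longrightarrow> x \<sqsubseteq> u) \<Longrightarrow> \<Squnion>P = u"
  by (meson fjoin_closed fjoin_least fjoin_upper le_antisym subsetD)

lemma fjoin_hom:
  assumes "finite P" "P \<subseteq> car S"
    and closed: "\<And>x. x \<in> car S \<Longrightarrow> h x \<in> car S"
    and join: "\<And>x y. x \<in> car S \<Longrightarrow> y \<in> car S \<Longrightarrow> h (x \<squnion> y) = h x \<squnion> h y"
    and bot: "h \<bottom> = \<bottom>"
  shows "h (\<Squnion>P) = \<Squnion>(h ` P)"
  using assms(1,2)
proof (induction P rule: finite_induct)
  case (insert x P)
  then have "h ` P \<subseteq> car S"
    using closed by auto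
  with insert show ?case
    by (simp add: fjoin_insert join closed)
qed (simp add: bot)

lemma meet_fjoin_distrib:
  "finite P \<Longrightarrow> P \<subseteq> car S \<Longrightarrow> x \<in> car S \<Longrightarrow> x \<sqinter> \<Squnion>P = \<Squnion>((\<sqinter>) x ` P)"
  by (rule fjoin_hom[where h = "(\<sqinter>) x"]) (simp_all add: meet_join_distrib)

lemma comp_fjoin_comp_distrib:
  "finite P \<Longrightarrow> P \<subseteq> car S \<Longrightarrow> x \<in> car S \<Longrightarrow> y \<in> car S
    \<Longrightarrow> x \<cdot> \<Squnion>P \<cdot> y = \<Squnion>((\<lambda>z. x \<cdot> z \<cdot> y) ` P)"
  by (rule fjoin_hom[where h = "\<lambda>z. x \<cdot> z \<cdot> y"])
    (simp_all add: comp_join_distrib_left comp_join_distrib_right)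

lemma comp_fjoin_least:
  assumes "finite P" "P \<subseteq> car S" "x \<in> car S" "u \<in> car S" "\<And>z. z \<in> P \<Longrightarrow> x \<cdot> z \<sqsubseteq> u"
  shows "x \<cdot> \<Squnion>P \<sqsubseteq> u"
proof -
  have "x \<cdot> \<Squnion>P = \<Squnion>((\<cdot>) x ` P)"
    by (rule fjoin_hom[where h = "(\<cdot>) x"]) (use assms in \<open>simp_all add: comp_join_distrib_left\<close>)
  also have "\<Squnion>((\<cdot>) x ` P) \<sqsubseteq> u"
    using assms by (intro fjoin_least) auto
  finally show ?thesis .
qed

lemma fjoin_comp_least:
  assumes "finite P" "P \<subseteq> car S" "y \<in> car S" "u \<in> car S" "\<And>z. z \<in> P \<Longrightarrow> z \<cdot> y \<sqsubseteq> u"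
  shows "\<Squnion>P \<cdot> y \<sqsubseteq> u"
proof -
  have "\<Squnion>P \<cdot> y = \<Squnion>((\<lambda>z. z \<cdot> y) ` P)"
    by (rule fjoin_hom[where h = "\<lambda>z. z \<cdot> y"]) (use assms in \<open>simp_all add: comp_join_distrib_right\<close>)
  also have "\<Squnion>((\<lambda>z. z \<cdot> y) ` P) \<sqsubseteq> u"
    using assms by (intro fjoin_least) auto
  finally show ?thesis .
qed

subsection \<open>Ideals and points\<close>

lemma point_comp_top: "point S p \<Longrightarrow> p \<cdot> \<top> = p"
  by (simp add: point_def vector_def)

lemma point_comp_conv_le_one: "point S p \<Longrightarrow> p \<cdot> p\<^sup>\<smile> \<sqsubseteq> \<one>"
  by (simp add: point_def bijective_def injective_def)

lemma one_le_conv_comp_point: "point S p \<Longrightarrow> \<one> \<sqsubseteq> p\<^sup>\<smile> \<cdot> p"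
  by (simp add: point_def bijective_def surjective_def)

lemma IPs_closed [simp]: "p \<in> IPs S \<Longrightarrow> p \<in> car S"
  unfolding IPs_def by blast

lemma IPs_subset [simp]: "IPs S \<subseteq> car S"
  by auto

lemma IPs_point [simp]: "p \<in> IPs S \<Longrightarrow> point S p"
  unfolding IPs_def ideal_point_def by blast

lemma ideal_comp_eq_meet:
  assumes a: "a \<in> car S" "ideal S a" and b: "b \<in> car S" "ideal S b"
  shows "a \<cdot> b = a \<sqinter> b"
proof (rule le_antisym)
  have vector: "a \<cdot> \<top> = a" and covector: "\<top> \<cdot> b = b"
    using a b by (simp_all add: ideal_def vector_def covector_def)
  show "a \<cdot> b \<sqsubseteq> a \<sqinter> b"
    using comp_left_mono[of a b \<top>] comp_right_mono[of a \<top> b] a b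
    by (simp add: vector covector)
  have "a \<sqinter> b \<sqsubseteq> a \<cdot> (a\<^sup>\<smile> \<cdot> b)"
    using dedekind[of a \<top> b] a b by (simp add: vector)
  moreover have "a \<cdot> (a\<^sup>\<smile> \<cdot> b) \<sqsubseteq> a \<cdot> (\<top> \<cdot> b)"
    using a b by (intro comp_left_mono comp_right_mono) simp_all
  ultimately have "a \<sqinter> b \<sqsubseteq> a \<cdot> (\<top> \<cdot> b)"
    by (rule le_trans) (use a b in simp_all)
  then show "a \<sqinter> b \<sqsubseteq> a \<cdot> b"
    by (simp add: covector)
qed (use a b in simp_all)

lemma ideal_conv:
  assumes "a \<in> car S" "ideal S a"
  shows "ideal S (a\<^sup>\<smile>)"
  using assms conv_comp[of a \<top>] conv_comp[of \<top> a]
  by (simp add: ideal_def vector_def covector_def)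

lemma ideal_le_conv:
  assumes a: "a \<in> car S" "ideal S a"
  shows "a \<sqsubseteq> a\<^sup>\<smile>"
proof -
  have "a \<cdot> a\<^sup>\<smile> \<cdot> a \<sqsubseteq> \<top> \<cdot> a\<^sup>\<smile> \<cdot> \<top>"
    using a by (intro comp_mono comp_right_mono) simp_all
  also have "\<top> \<cdot> a\<^sup>\<smile> \<cdot> \<top> = a\<^sup>\<smile>"
    using ideal_conv[OF a] a by (simp add: ideal_def vector_def covector_def)
  finally have "a \<cdot> a\<^sup>\<smile> \<cdot> a \<sqsubseteq> a\<^sup>\<smile>" .
  then show ?thesis
    using le_trans[OF le_comp_conv_comp[OF a(1)]] a by simp
qed

lemma ideal_conv_eq [simp]: "a \<in> car S \<Longrightarrow> ideal S a \<Longrightarrow> a\<^sup>\<smile> = a"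
  by (metis ideal_le_conv ideal_conv le_antisym conv_conv closed(8))

lemma point_conv_comp_self:
  assumes "p \<in> car S" "point S p"
  shows "p\<^sup>\<smile> \<cdot> p = \<top>"
proof (rule le_antisym)
  have "\<one> \<cdot> \<top> \<sqsubseteq> p\<^sup>\<smile> \<cdot> p \<cdot> \<top>"
    using assms by (intro comp_right_mono) (simp_all add: one_le_conv_comp_point)
  then show "\<top> \<sqsubseteq> p\<^sup>\<smile> \<cdot> p"
    using assms by (simp add: comp_assoc point_comp_top)
qed (use assms in simp_all)

lemma point_conv_comp_top:
  assumes "p \<in> car S" "point S p"
  shows "p\<^sup>\<smile> \<cdot> \<top> = \<top>"
  using assms point_conv_comp_self comp_left_mono[of "p\<^sup>\<smile>" p \<top>]
  by (metis le_antisym top_greatest closed)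

lemma top_comp_point:
  assumes "p \<in> car S" "point S p"
  shows "\<top> \<cdot> p = \<top>"
  using assms point_conv_comp_self comp_right_mono[of "p\<^sup>\<smile>" \<top> p]
  by (metis le_antisym top_greatest closed)

lemma top_comp_point_conv:
  assumes "p \<in> car S" "point S p"
  shows "\<top> \<cdot> p\<^sup>\<smile> = p\<^sup>\<smile>"
  using assms conv_comp[of p \<top>] by (simp add: point_comp_top)

lemma ideal_conv_comp_comp:
  assumes p: "p \<in> car S" "point S p" and q: "q \<in> car S" "point S q" and x: "x \<in> car S"
  shows "ideal S (p\<^sup>\<smile> \<cdot> x \<cdot> q)"
proof -
  have "p\<^sup>\<smile> \<cdot> x \<cdot> q \<cdot> \<top> = p\<^sup>\<smile> \<cdot> x \<cdot> (q \<cdot> \<top>)"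
    using p q x by (simp add: comp_assoc)
  then have "vector S (p\<^sup>\<smile> \<cdot> x \<cdot> q)"
    using q by (simp add: vector_def point_comp_top)
  have "\<top> \<cdot> (p\<^sup>\<smile> \<cdot> x \<cdot> q) = \<top> \<cdot> p\<^sup>\<smile> \<cdot> x \<cdot> q"
    using p q x by (simp add: comp_assoc)
  then have "covector S (p\<^sup>\<smile> \<cdot> x \<cdot> q)"
    using p by (simp add: covector_def top_comp_point_conv)
  show ?thesis
    using \<open>vector S _\<close> \<open>covector S _\<close> by (simp add: ideal_def)
qed

lemma ideal_point_maximal:
  "ideal_point S p \<Longrightarrow> q \<in> car S \<Longrightarrow> point S q \<Longrightarrow> x \<in> car S \<Longrightarrow> ideal S x \<Longrightarrow> x \<noteq> \<bottom>
    \<Longrightarrow> q \<cdot> x \<sqsubseteq> p \<Longrightarrow> q \<sqsubseteq> p"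
  unfolding ideal_point_def by blast

lemma ideal_points_disjoint:
  assumes p: "p \<in> IPs S" and q: "q \<in> IPs S" and "p \<noteq> q"
  shows "p\<^sup>\<smile> \<cdot> q = \<bottom>"
proof (rule ccontr)
  assume nonzero: "p\<^sup>\<smile> \<cdot> q \<noteq> \<bottom>"
  have carrier: "p \<in> car S" "q \<in> car S" and points: "point S p" "point S q"
    using p q by simp_all
  have maximal: "ideal_point S p" "ideal_point S q"
    using p q unfolding IPs_def by simp_all
  have ideal: "ideal S (p\<^sup>\<smile> \<cdot> q)"
    using ideal_conv_comp_comp[of p q \<one>] carrier points by simp
  have "q\<^sup>\<smile> \<cdot> p = (p\<^sup>\<smile> \<cdot> q)\<^sup>\<smile>"
    using carrier by (simp add: conv_comp)
  also have "\<dots> = p\<^sup>\<smile> \<cdot> q"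
    using ideal carrier by simp
  finally have symm: "q\<^sup>\<smile> \<cdot> p = p\<^sup>\<smile> \<cdot> q" .
  have absorb: "r \<cdot> (r\<^sup>\<smile> \<cdot> s) \<sqsubseteq> s" if "r \<in> car S" "point S r" "s \<in> car S" for r s
    using that comp_right_mono[of "r \<cdot> r\<^sup>\<smile>" \<one> s]
    by (simp add: point_comp_conv_le_one comp_assoc)
  have "p \<cdot> (p\<^sup>\<smile> \<cdot> q) \<sqsubseteq> q"
    using absorb carrier points by simp
  then have "p \<sqsubseteq> q"
    using ideal_point_maximal[OF maximal(2) _ _ _ ideal nonzero] carrier points by simp
  have "q \<cdot> (p\<^sup>\<smile> \<cdot> q) \<sqsubseteq> p"
    using absorb carrier points by (simp flip: symm)
  then have "q \<sqsubseteq> p"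
    using ideal_point_maximal[OF maximal(1) _ _ _ ideal nonzero] carrier points by simp
  with \<open>p \<sqsubseteq> q\<close> show False
    using \<open>p \<noteq> q\<close> carrier le_antisym by blast
qed

lemma point_coordinate_meet:
  assumes "p \<in> car S" "point S p" "q \<in> car S" "point S q" "x \<in> car S" "y \<in> car S"
  shows "p\<^sup>\<smile> \<cdot> (x \<sqinter> y) \<cdot> q = p\<^sup>\<smile> \<cdot> x \<cdot> q \<sqinter> p\<^sup>\<smile> \<cdot> y \<cdot> q"
  using assms by (simp add: point_def bijective_def injective_conv_comp_meet injective_meet_comp)

lemma point_coordinate_pcm:
  assumes p: "p \<in> car S" "point S p" and q: "q \<in> car S" "point S q" and x: "x \<in> car S"
  shows "p\<^sup>\<smile> \<cdot> \<sim>x \<cdot> q = \<sim>(p\<^sup>\<smile> \<cdot> x \<cdot> q)"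
proof (rule le_antisym)
  define c where "c = \<sim>(p\<^sup>\<smile> \<cdot> x \<cdot> q)"
  have c: "c \<in> car S"
    using p q x by (simp add: c_def)
  have "p\<^sup>\<smile> \<cdot> \<sim>x \<cdot> q \<sqinter> p\<^sup>\<smile> \<cdot> x \<cdot> q = p\<^sup>\<smile> \<cdot> (\<sim>x \<sqinter> x) \<cdot> q"
    using p q x by (simp add: point_coordinate_meet)
  also have "\<dots> = \<bottom>"
    using x meet_eq_bot_iff_le_pcm[of "\<sim>x" x] p q by simp
  finally show "p\<^sup>\<smile> \<cdot> \<sim>x \<cdot> q \<sqsubseteq> \<sim>(p\<^sup>\<smile> \<cdot> x \<cdot> q)"
    using p q x by (simp add: meet_eq_bot_iff_le_pcm)
  (* Conversely, p c q\<^sup>\<smile> is disjoint from x by two Dedekind steps, and surjectivity of the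
     points gives c \<sqsubseteq> p\<^sup>\<smile> (p c q\<^sup>\<smile>) q. *)
  have "c \<cdot> q\<^sup>\<smile> \<sqinter> p\<^sup>\<smile> \<cdot> x \<sqsubseteq> (c \<sqinter> p\<^sup>\<smile> \<cdot> x \<cdot> q) \<cdot> q\<^sup>\<smile>"
    using dedekind_right[of "q\<^sup>\<smile>" c "p\<^sup>\<smile> \<cdot> x"] p q x c by simp
  then have "c \<cdot> q\<^sup>\<smile> \<sqinter> p\<^sup>\<smile> \<cdot> x = \<bottom>"
    using p q x c meet_eq_bot_iff_le_pcm[of c "p\<^sup>\<smile> \<cdot> x \<cdot> q"] by (simp add: c_def)
  then have "p \<cdot> c \<cdot> q\<^sup>\<smile> \<sqinter> x = \<bottom>"
    using dedekind[of p "c \<cdot> q\<^sup>\<smile>" x] p q x c by (simp add: comp_assoc)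
  then have upper: "p\<^sup>\<smile> \<cdot> (p \<cdot> c \<cdot> q\<^sup>\<smile>) \<cdot> q \<sqsubseteq> p\<^sup>\<smile> \<cdot> \<sim>x \<cdot> q"
    using p q x c meet_eq_bot_iff_le_pcm[of "p \<cdot> c \<cdot> q\<^sup>\<smile>" x]
    by (intro comp_left_mono comp_right_mono) simp_all
  have "c \<sqsubseteq> p\<^sup>\<smile> \<cdot> (p \<cdot> c \<cdot> q\<^sup>\<smile>) \<cdot> q"
  proof -
    have "\<one> \<cdot> c \<cdot> \<one> \<sqsubseteq> p\<^sup>\<smile> \<cdot> p \<cdot> c \<cdot> (q\<^sup>\<smile> \<cdot> q)"
      using p q c by (intro comp_mono comp_right_mono)
        (simp_all add: one_le_conv_comp_point)
    then show ?thesis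
      using p q c by (simp add: comp_assoc)
  qed
  then have "c \<sqsubseteq> p\<^sup>\<smile> \<cdot> \<sim>x \<cdot> q"
    using upper by (rule le_trans) (use p q x c in simp_all)
  then show "\<sim>(p\<^sup>\<smile> \<cdot> x \<cdot> q) \<sqsubseteq> p\<^sup>\<smile> \<cdot> \<sim>x \<cdot> q"
    by (simp add: c_def)
qed (use p q x in simp_all)

end

section \<open>The matrix representation\<close>

locale stone_relation_algebra_with_points = stone_relation_algebra +
  assumes point_axiom: "point_axiom S"
begin

lemma finite_IPs [simp]: "finite (IPs S)"
  using point_axiom unfolding point_axiom_def by blast

lemma fjoin_IPs: "\<Squnion>(IPs S) = \<top>"
  using point_axiom unfolding point_axiom_def by simp

lemma fjoin_point_comp_conv: "\<Squnion>((\<lambda>r. r \<cdot> r\<^sup>\<smile>) ` IPs S) = \<one>"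
proof (rule le_antisym)
  let ?R = "(\<lambda>r. r \<cdot> r\<^sup>\<smile>) ` IPs S"
  have R: "finite ?R" "?R \<subseteq> car S"
    by auto
  show "\<Squnion>?R \<sqsubseteq> \<one>"
    using R by (rule fjoin_least) (auto simp: point_comp_conv_le_one)
  have "\<one> \<sqinter> r \<sqsubseteq> \<Squnion>?R" if r: "r \<in> IPs S" for r
  proof -
    have "r \<cdot> \<top> \<sqinter> \<one> \<sqsubseteq> r \<cdot> r\<^sup>\<smile>"
      using dedekind[of r \<top> \<one>] r by simp
    then have "\<one> \<sqinter> r \<sqsubseteq> r \<cdot> r\<^sup>\<smile>"
      using r by (simp add: point_comp_top meet_comm)
    moreover have "r \<cdot> r\<^sup>\<smile> \<sqsubseteq> \<Squnion>?R"
      using R r by (intro fjoin_upper) auto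
    ultimately show ?thesis
      by (rule le_trans) (use R r in simp_all)
  qed
  then have "\<Squnion>((\<sqinter>) \<one> ` IPs S) \<sqsubseteq> \<Squnion>?R"
    using R by (intro fjoin_least) auto
  moreover have "\<Squnion>((\<sqinter>) \<one> ` IPs S) = \<one> \<sqinter> \<top>"
    using meet_fjoin_distrib[of "IPs S" \<one>] by (simp add: fjoin_IPs)
  moreover have "\<one> \<sqinter> \<top> = \<one>"
    using meet_comm[of \<one> \<top>] by simp
  ultimately show "\<one> \<sqsubseteq> \<Squnion>?R"
    by simp
qed (auto intro: fjoin_closed)

lemma Mat_simps:
  "car (Mat S) = IPs S \<times> IPs S \<rightarrow>\<^sub>E Is S"
  "jn (Mat S) X Y = restrict (\<lambda>pq. X pq \<squnion> Y pq) (IPs S \<times> IPs S)"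
  "mt (Mat S) X Y = restrict (\<lambda>pq. X pq \<sqinter> Y pq) (IPs S \<times> IPs S)"
  "cmp (Mat S) X Y =
    restrict (\<lambda>(p, q). \<Squnion>((\<lambda>r. X (p, r) \<sqinter> Y (r, q)) ` IPs S)) (IPs S \<times> IPs S)"
  "pcm (Mat S) X = restrict (\<lambda>pq. \<sim>X pq) (IPs S \<times> IPs S)"
  "cnv (Mat S) X = restrict (\<lambda>(p, q). X (q, p)) (IPs S \<times> IPs S)"
  "bt (Mat S) = restrict (\<lambda>pq. \<bottom>) (IPs S \<times> IPs S)"
  "tp (Mat S) = restrict (\<lambda>pq. \<top>) (IPs S \<times> IPs S)"
  "un (Mat S) = restrict (\<lambda>(p, q). if p = q then \<top> else \<bottom>) (IPs S \<times> IPs S)"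
  by (simp_all add: Mat_def Let_def)

lemma Mat_entry:
  assumes "X \<in> car (Mat S)" "p \<in> IPs S" "q \<in> IPs S"
  shows "X (p, q) \<in> car S" "ideal S (X (p, q))"
  using assms PiE_mem[of X "IPs S \<times> IPs S" "\<lambda>_. Is S" "(p, q)"]
  by (simp_all add: Mat_simps Is_def)

lemma f_iso_apply [simp]: "p \<in> IPs S \<Longrightarrow> q \<in> IPs S \<Longrightarrow> f_iso S x (p, q) = p\<^sup>\<smile> \<cdot> x \<cdot> q"
  by (simp add: f_iso_def)

lemma f_iso_closed: "x \<in> car S \<Longrightarrow> f_iso S x \<in> car (Mat S)"
  by (auto simp: Mat_simps f_iso_def Is_def ideal_conv_comp_comp)

lemma f_iso_eqI:
  assumes "\<And>p q. p \<in> IPs S \<Longrightarrow> q \<in> IPs S \<Longrightarrow> p\<^sup>\<smile> \<cdot> x \<cdot> q = F (p, q)"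
  shows "f_iso S x = restrict F (IPs S \<times> IPs S)"
  unfolding f_iso_def by (rule restrict_ext) (auto simp: assms)

abbreviation matrix_terms :: "('a \<times> 'a \<Rightarrow> 'a) \<Rightarrow> 'a set" where
  "matrix_terms X \<equiv> (\<lambda>(p, q). p \<cdot> X (p, q) \<cdot> q\<^sup>\<smile>) ` (IPs S \<times> IPs S)"

lemma matrix_terms_closed: "X \<in> car (Mat S) \<Longrightarrow> matrix_terms X \<subseteq> car S"
  by (auto simp: Mat_entry)

lemma g_iso_closed: "X \<in> car (Mat S) \<Longrightarrow> g_iso S X \<in> car S"
  by (simp add: g_iso_def matrix_terms_closed)

lemma g_iso_f_iso:
  assumes x: "x \<in> car S"
  shows "g_iso S (f_iso S x) = x"
proof (rule le_antisym)
  let ?R = "(\<lambda>r. r \<cdot> r\<^sup>\<smile>) ` IPs S"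
  have R: "finite ?R" "?R \<subseteq> car S"
    by auto
  have terms: "matrix_terms (f_iso S x) = (\<lambda>(p, q). p \<cdot> p\<^sup>\<smile> \<cdot> x \<cdot> (q \<cdot> q\<^sup>\<smile>)) ` (IPs S \<times> IPs S)"
    using x by (intro image_cong) (auto simp: comp_assoc)
  have g: "g_iso S (f_iso S x) \<in> car S"
    using x by (simp add: f_iso_closed g_iso_closed)
  show "g_iso S (f_iso S x) \<sqsubseteq> x"
    unfolding g_iso_def terms
  proof (rule fjoin_least)
    fix t assume "t \<in> (\<lambda>(p, q). p \<cdot> p\<^sup>\<smile> \<cdot> x \<cdot> (q \<cdot> q\<^sup>\<smile>)) ` (IPs S \<times> IPs S)"
    then obtain p q where pq: "p \<in> IPs S" "q \<in> IPs S" and t: "t = p \<cdot> p\<^sup>\<smile> \<cdot> x \<cdot> (q \<cdot> q\<^sup>\<smile>)"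
      by auto
    have "p \<cdot> p\<^sup>\<smile> \<cdot> x \<cdot> (q \<cdot> q\<^sup>\<smile>) \<sqsubseteq> \<one> \<cdot> x \<cdot> \<one>"
      using pq x by (intro comp_mono comp_right_mono) (simp_all add: point_comp_conv_le_one)
    then show "t \<sqsubseteq> x"
      using x by (simp add: t)
  qed (use x in auto)
  (* Conversely, insert 1 = \<Squnion> r r\<^sup>\<smile> on both sides of x. *)
  have "t \<cdot> x \<cdot> s \<sqsubseteq> g_iso S (f_iso S x)" if t: "t \<in> ?R" and s: "s \<in> ?R" for t s
  proof -
    obtain p q where "p \<in> IPs S" "q \<in> IPs S" "t = p \<cdot> p\<^sup>\<smile>" "s = q \<cdot> q\<^sup>\<smile>"
      using t s by auto
    then have "t \<cdot> x \<cdot> s \<in> matrix_terms (f_iso S x)"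
      unfolding terms by (auto intro: rev_image_eqI[of "(p, q)"])
    then show ?thesis
      unfolding g_iso_def using x by (intro fjoin_upper) (simp_all add: f_iso_closed matrix_terms_closed)
  qed
  then have "t \<cdot> x \<cdot> \<Squnion>?R \<sqsubseteq> g_iso S (f_iso S x)" if "t \<in> ?R" for t
    using that R x g by (intro comp_fjoin_least) auto
  then have "\<Squnion>?R \<cdot> (x \<cdot> \<Squnion>?R) \<sqsubseteq> g_iso S (f_iso S x)"
    using R x g by (intro fjoin_comp_least) (auto simp flip: comp_assoc)
  then show "x \<sqsubseteq> g_iso S (f_iso S x)"
    using x by (simp add: fjoin_point_comp_conv)
qed (use x g_iso_closed f_iso_closed in auto)

lemma coordinate_g_iso:
  assumes X: "X \<in> car (Mat S)" and p: "p \<in> IPs S" and q: "q \<in> IPs S"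
  shows "p\<^sup>\<smile> \<cdot> g_iso S X \<cdot> q = X (p, q)"
proof -
  have T: "finite (matrix_terms X)" "matrix_terms X \<subseteq> car S"
    using matrix_terms_closed[OF X] by simp_all
  note entry = Mat_entry[OF X]
  have "p\<^sup>\<smile> \<cdot> g_iso S X \<cdot> q = \<Squnion>((\<lambda>e. p\<^sup>\<smile> \<cdot> e \<cdot> q) ` matrix_terms X)"
    unfolding g_iso_def using T p q by (intro comp_fjoin_comp_distrib) simp_all
  (* Only the term with r = p and s = q survives, since distinct ideal-points are disjoint. *)
  also have "\<dots> = X (p, q)"
  proof (rule fjoin_eqI)
    have "p\<^sup>\<smile> \<cdot> (p \<cdot> X (p, q) \<cdot> q\<^sup>\<smile>) \<cdot> q = p\<^sup>\<smile> \<cdot> p \<cdot> X (p, q) \<cdot> (q\<^sup>\<smile> \<cdot> q)"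
      using p q entry by (simp add: comp_assoc)
    also have "\<dots> = \<top> \<cdot> X (p, q) \<cdot> \<top>"
      using p q by (simp add: point_conv_comp_self)
    also have "\<dots> = X (p, q)"
      using p q entry by (simp add: comp_assoc ideal_def vector_def covector_def)
    finally have "X (p, q) = p\<^sup>\<smile> \<cdot> (p \<cdot> X (p, q) \<cdot> q\<^sup>\<smile>) \<cdot> q" ..
    moreover have "p \<cdot> X (p, q) \<cdot> q\<^sup>\<smile> \<in> matrix_terms X"
      using p q by (intro rev_image_eqI[of "(p, q)"]) simp_all
    ultimately show "X (p, q) \<in> (\<lambda>e. p\<^sup>\<smile> \<cdot> e \<cdot> q) ` matrix_terms X"
      by (rule image_eqI)
    fix e assume "e \<in> (\<lambda>e. p\<^sup>\<smile> \<cdot> e \<cdot> q) ` matrix_terms X"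
    then obtain r s where rs: "r \<in> IPs S" "s \<in> IPs S" and "e = p\<^sup>\<smile> \<cdot> (r \<cdot> X (r, s) \<cdot> s\<^sup>\<smile>) \<cdot> q"
      by auto
    then have e: "e = p\<^sup>\<smile> \<cdot> r \<cdot> X (r, s) \<cdot> (s\<^sup>\<smile> \<cdot> q)"
      using p q entry by (simp add: comp_assoc)
    show "e \<sqsubseteq> X (p, q)"
    proof (cases "r = p \<and> s = q")
      case True
      then have "e = p\<^sup>\<smile> \<cdot> (p \<cdot> X (p, q) \<cdot> q\<^sup>\<smile>) \<cdot> q"
        using p q entry by (simp add: e comp_assoc)
      then show ?thesis
        using \<open>X (p, q) = _\<close> p q entry by simp
    next
      case False
      then have "p\<^sup>\<smile> \<cdot> r = \<bottom> \<or> s\<^sup>\<smile> \<cdot> q = \<bottom>"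
        using ideal_points_disjoint p q rs by blast
      then show ?thesis
        using e p q rs entry by auto
    qed
  qed (use T p q entry in auto)
  finally show ?thesis .
qed

lemma f_iso_g_iso:
  assumes X: "X \<in> car (Mat S)"
  shows "f_iso S (g_iso S X) = X"
proof (rule PiE_ext)
  show "f_iso S (g_iso S X) \<in> IPs S \<times> IPs S \<rightarrow>\<^sub>E Is S" "X \<in> IPs S \<times> IPs S \<rightarrow>\<^sub>E Is S"
    using f_iso_closed[OF g_iso_closed[OF X]] X by (simp_all add: Mat_simps)
  fix pq assume "pq \<in> IPs S \<times> IPs S"
  then show "f_iso S (g_iso S X) pq = X pq"
    using coordinate_g_iso[OF X] by auto
qed

lemma f_iso_join: "x \<in> car S \<Longrightarrow> y \<in> car S \<Longrightarrow> f_iso S (x \<squnion> y) = jn (Mat S) (f_iso S x) (f_iso S y)"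
  unfolding Mat_simps by (rule f_iso_eqI) (simp add: comp_join_distrib_left comp_join_distrib_right)

lemma f_iso_meet: "x \<in> car S \<Longrightarrow> y \<in> car S \<Longrightarrow> f_iso S (x \<sqinter> y) = mt (Mat S) (f_iso S x) (f_iso S y)"
  unfolding Mat_simps by (rule f_iso_eqI) (simp add: point_coordinate_meet)

lemma f_iso_pcm: "x \<in> car S \<Longrightarrow> f_iso S (\<sim>x) = pcm (Mat S) (f_iso S x)"
  unfolding Mat_simps by (rule f_iso_eqI) (simp add: point_coordinate_pcm)

lemma f_iso_cnv: "x \<in> car S \<Longrightarrow> f_iso S (x\<^sup>\<smile>) = cnv (Mat S) (f_iso S x)"
  unfolding Mat_simps
proof (rule f_iso_eqI)
  fix p q assume x: "x \<in> car S" and p: "p \<in> IPs S" and q: "q \<in> IPs S"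
  have "p\<^sup>\<smile> \<cdot> x\<^sup>\<smile> \<cdot> q = (q\<^sup>\<smile> \<cdot> x \<cdot> p)\<^sup>\<smile>"
    using x p q by (simp add: conv_comp comp_assoc)
  also have "\<dots> = q\<^sup>\<smile> \<cdot> x \<cdot> p"
    using x p q by (simp add: ideal_conv_comp_comp)
  finally show "p\<^sup>\<smile> \<cdot> x\<^sup>\<smile> \<cdot> q = (\<lambda>(p, q). f_iso S x (q, p)) (p, q)"
    using p q by simp
qed

lemma f_iso_comp:
  assumes x: "x \<in> car S" and y: "y \<in> car S"
  shows "f_iso S (x \<cdot> y) = cmp (Mat S) (f_iso S x) (f_iso S y)"
  unfolding Mat_simps
proof (rule f_iso_eqI)
  fix p q assume p: "p \<in> IPs S" and q: "q \<in> IPs S"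
  let ?R = "(\<lambda>r. r \<cdot> r\<^sup>\<smile>) ` IPs S"
  have "p\<^sup>\<smile> \<cdot> (x \<cdot> y) \<cdot> q = p\<^sup>\<smile> \<cdot> x \<cdot> \<Squnion>?R \<cdot> (y \<cdot> q)"
    using x y p q by (simp add: fjoin_point_comp_conv comp_assoc)
  also have "\<dots> = \<Squnion>((\<lambda>z. p\<^sup>\<smile> \<cdot> x \<cdot> z \<cdot> (y \<cdot> q)) ` ?R)"
    using x y p q by (intro comp_fjoin_comp_distrib) auto
  also have "\<dots> = \<Squnion>((\<lambda>r. p\<^sup>\<smile> \<cdot> x \<cdot> r \<cdot> (r\<^sup>\<smile> \<cdot> y \<cdot> q)) ` IPs S)"
    unfolding image_image using x y p q
    by (intro arg_cong[where f = "fjoin S"] image_cong) (simp_all add: comp_assoc)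
  also have "\<dots> = \<Squnion>((\<lambda>r. p\<^sup>\<smile> \<cdot> x \<cdot> r \<sqinter> r\<^sup>\<smile> \<cdot> y \<cdot> q) ` IPs S)"
    using x y p q
    by (intro arg_cong[where f = "fjoin S"] image_cong) (simp_all add: ideal_comp_eq_meet ideal_conv_comp_comp)
  finally show "p\<^sup>\<smile> \<cdot> (x \<cdot> y) \<cdot> q =
      (\<lambda>(p, q). \<Squnion>((\<lambda>r. f_iso S x (p, r) \<sqinter> f_iso S y (r, q)) ` IPs S)) (p, q)"
    using p q by simp
qed

lemma f_iso_bot: "f_iso S \<bottom> = bt (Mat S)"
  unfolding Mat_simps by (rule f_iso_eqI) simp

lemma f_iso_top: "f_iso S \<top> = tp (Mat S)"
  unfolding Mat_simps by (rule f_iso_eqI) (simp add: point_conv_comp_top top_comp_point comp_assoc)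

lemma f_iso_one: "f_iso S \<one> = un (Mat S)"
  unfolding Mat_simps by (rule f_iso_eqI) (auto simp: point_conv_comp_self ideal_points_disjoint)

lemma sra_iso_f_iso: "sra_iso S (Mat S) (f_iso S)"
  unfolding sra_iso_def
proof (intro conjI ballI)
  show "bij_betw (f_iso S) (car S) (car (Mat S))"
    by (rule bij_betwI[where g = "g_iso S"])
      (auto simp: f_iso_closed g_iso_closed g_iso_f_iso f_iso_g_iso)
qed (simp_all add: f_iso_join f_iso_meet f_iso_comp f_iso_pcm f_iso_cnv f_iso_bot f_iso_top f_iso_one)

end

theorem mainTheorem1:
  fixes S :: "'a sra"
  assumes "stone_ra S"
    and "point_axiom S"
  shows "stone_ra (Mat S) \<and> sra_iso S (Mat S) (f_iso S) \<and> sra_iso (Mat S) S (g_iso S)"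
proof -
  interpret stone_relation_algebra_with_points S
    using assms by unfold_locales
  have f: "sra_iso S (Mat S) (f_iso S)"
    by (rule sra_iso_f_iso)
  moreover have "stone_ra (Mat S)"
    using assms(1) f by (rule stone_ra_transfer)
  moreover have "sra_iso (Mat S) S (g_iso S)"
    using assms(1) f by (rule sra_iso_inverse) (simp_all add: g_iso_f_iso g_iso_closed f_iso_g_iso)
  ultimately show ?thesis
    by blast
qed

end
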